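(* Let $R$ be an abelian ring (an associative ring with identity in which every idempotent is central). Then $R$ is weakly clean if and only if $R$ is weakly $r$-clean.
   Context: For a ring $R$ with identity, $U(R)$ denotes its units, $Idem(R)$ its idempotents, and $Reg(R)=\{r\in R:\ r=ryr \text{ for some } y\in R\}$ its (von Neumann) regular elements. An element $x\in R$ is weakly clean if $x=u+e$ or $x=u-e$ for some $u\in U(R)$, $e\in Idem(R)$; $R$ is weakly clean if all its elements are weakly clean. An element $x\in R$ is weakly $r$-clean if $x=r+e$ or $x=r-e$ for some $r\in Reg(R)$, $e\in Idem(R)$; $R$ is weakly $r$-clean if all its elements are weakly $r$-clean. *)

theory Defs
  imports Main
begin

definition units_of_ring :: "'a::ring_1 set" where
  "units_of_ring = {u. \<exists>v. u * v = 1 \<and> v * u = 1}"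

definition idems :: "'a::ring_1 set" where
  "idems = {e. e * e = e}"

definition regs :: "'a::ring_1 set" where
  "regs = {r. \<exists>y. r = r * y * r}"

definition weakly_clean_elem :: "'a::ring_1 \<Rightarrow> bool" where
  "weakly_clean_elem x \<longleftrightarrow>
     (\<exists>u\<in>units_of_ring. \<exists>e\<in>idems. x = u + e \<or> x = u - e)"

definition weakly_clean_ring :: "'a::ring_1 itself \<Rightarrow> bool" where
  "weakly_clean_ring _ \<longleftrightarrow> (\<forall>x::'a. weakly_clean_elem x)"

definition weakly_r_clean_elem :: "'a::ring_1 \<Rightarrow> bool" where
  "weakly_r_clean_elem x \<longleftrightarrow>
     (\<exists>r\<in>regs. \<exists>e\<in>idems. x = r + e \<or> x = r - e)"

definition weakly_r_clean_ring :: "'a::ring_1 itself \<Rightarrow> bool" where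
  "weakly_r_clean_ring _ \<longleftrightarrow> (\<forall>x::'a. weakly_r_clean_elem x)"

definition abelian_ring :: "'a::ring_1 itself \<Rightarrow> bool" where
  "abelian_ring _ \<longleftrightarrow> (\<forall>e::'a. e \<in> idems \<longrightarrow> (\<forall>x::'a. e * x = x * e))"

end

theory Submission
  imports Defs
begin

text \<open>Units are regular, which gives one direction. Conversely, in an abelian ring a regular
  element \<open>r\<close> has a reflexive inverse \<open>z\<close>; the idempotents \<open>r z\<close> and \<open>z r\<close> are central,
  which forces \<open>r z = z r\<close>, and then \<open>r = u e\<close> with \<open>e = r z\<close> and the unit
  \<open>u = r + (1 - e)\<close>. Splitting \<open>u e \<plusminus> g\<close> along the central idempotent \<open>e\<close> finally exhibits
  it as a unit plus or minus an idempotent.\<close>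

definition central_idem :: "'a::ring_1 \<Rightarrow> bool" where
  "central_idem e \<longleftrightarrow> e * e = e \<and> (\<forall>x. e * x = x * e)"

lemma abelian_ring_central_idem:
  assumes "abelian_ring TYPE('a::ring_1)" and "(e::'a) \<in> idems"
  shows "central_idem e"
  using assms unfolding abelian_ring_def idems_def central_idem_def by blast

lemma central_idem_idem: "central_idem e \<Longrightarrow> e * e = e"
  unfolding central_idem_def by blast

lemma central_idem_commute: "central_idem e \<Longrightarrow> e * x = x * e"
  unfolding central_idem_def by blast

lemma central_idem_compl:
  assumes "central_idem e" shows "central_idem (1 - e)"
proof -
  have "(1 - e) * (1 - e) = 1 - e"
    by (simp add: algebra_simps central_idem_idem[OF assms])
  moreover have "(1 - e) * x = x * (1 - e)" for x
    by (simp add: left_diff_distrib right_diff_distrib central_idem_commute[OF assms, of x])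
  ultimately show ?thesis unfolding central_idem_def by blast
qed

lemma central_idem_left_commute:
  assumes "central_idem e" shows "x * (e * y) = e * (x * y)"
proof -
  have "x * (e * y) = (x * e) * y" by (simp only: mult.assoc)
  also have "\<dots> = (e * x) * y" by (simp only: central_idem_commute[OF assms])
  finally show ?thesis by (simp only: mult.assoc)
qed

lemma central_idem_mult_same:
  assumes "central_idem e" shows "e * a * (e * c) = e * (a * c)"
proof -
  have "e * a * (e * c) = e * (e * (a * c))"
    by (simp only: mult.assoc central_idem_left_commute[OF assms, of a c])
  also have "\<dots> = e * (a * c)"
    by (simp only: mult.assoc[symmetric] central_idem_idem[OF assms])
  finally show ?thesis .
qed

lemma central_idem_mult_compl:
  assumes "central_idem e" shows "e * a * ((1 - e) * c) = 0"
proof -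
  have "e * a * ((1 - e) * c) = e * ((1 - e) * (a * c))"
    by (simp only: mult.assoc central_idem_left_commute[OF central_idem_compl[OF assms], of a c])
  also have "\<dots> = (e - e * e) * (a * c)"
    by (simp only: mult.assoc[symmetric] right_diff_distrib mult_1_right)
  finally show ?thesis by (simp add: central_idem_idem[OF assms])
qed

lemma central_idem_peirce_mult:
  fixes e a b c d :: "'a::ring_1"
  assumes e: "central_idem e"
  shows "(e * a + (1 - e) * b) * (e * c + (1 - e) * d) = e * (a * c) + (1 - e) * (b * d)"
proof -
  have f: "central_idem (1 - e)" using central_idem_compl[OF e] .
  have "(1 - e) * b * ((1 - (1 - e)) * c) = 0" using central_idem_mult_compl[OF f] .
  then have "(1 - e) * b * (e * c) = 0" by simp
  moreover have "e * a * (e * c) = e * (a * c)" using central_idem_mult_same[OF e] .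
  moreover have "e * a * ((1 - e) * d) = 0" using central_idem_mult_compl[OF e] .
  moreover have "(1 - e) * b * ((1 - e) * d) = (1 - e) * (b * d)"
    using central_idem_mult_same[OF f] .
  ultimately show ?thesis
    by (simp only: distrib_left distrib_right add_0_left add_0_right)
qed

lemma central_idem_combine_units:
  assumes "central_idem e" and "a \<in> units_of_ring" and "b \<in> units_of_ring"
  shows "e * a + (1 - e) * b \<in> units_of_ring"
proof -
  obtain a' b' where "a * a' = 1" "a' * a = 1" "b * b' = 1" "b' * b = 1"
    using assms(2,3) unfolding units_of_ring_def by blast
  then have "(e * a + (1 - e) * b) * (e * a' + (1 - e) * b') = 1"
    and "(e * a' + (1 - e) * b') * (e * a + (1 - e) * b) = 1"
    by (simp_all add: central_idem_peirce_mult[OF assms(1)])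
  then show ?thesis unfolding units_of_ring_def by blast
qed

lemma central_idem_combine_idems:
  assumes "central_idem e" and "a \<in> idems" and "b \<in> idems"
  shows "e * a + (1 - e) * b \<in> idems"
  using assms by (simp add: idems_def central_idem_peirce_mult)

lemma self_inverse_in_units:
  fixes s :: "'a::ring_1"
  shows "s * s = 1 \<Longrightarrow> s \<in> units_of_ring"
  unfolding units_of_ring_def by blast

lemma idem_reflection_squared:
  fixes g :: "'a::ring_1"
  assumes "g \<in> idems"
  shows "(2 * g - 1) * (2 * g - 1) = 1" and "(1 - 2 * g) * (1 - 2 * g) = 1"
  using assms by (simp_all add: idems_def algebra_simps mult_2 mult_2_right)

lemma compl_idem: "g \<in> idems \<Longrightarrow> 1 - g \<in> idems"
  by (simp add: idems_def algebra_simps)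

lemma units_imp_regs:
  assumes "u \<in> units_of_ring" shows "u \<in> regs"
proof -
  obtain v where "u * v = 1" using assms unfolding units_of_ring_def by blast
  then have "u = u * v * u" by simp
  then show ?thesis unfolding regs_def by blast
qed

lemma weakly_clean_imp_weakly_r_clean_elem:
  "weakly_clean_elem x \<Longrightarrow> weakly_r_clean_elem x"
  unfolding weakly_clean_elem_def weakly_r_clean_elem_def using units_imp_regs by blast

text \<open>With \<open>e\<close> central, \<open>u e \<plusminus> g\<close> is computed separately in the corner \<open>e R\<close>, where it is
  \<open>u \<plusminus> g\<close>, and in \<open>(1 - e) R\<close>, where it is \<open>\<plusminus>g = \<plusminus>(2 g - 1) \<plusminus> (1 - g)\<close>.\<close>

lemma unit_mult_central_idem_add_idem_weakly_clean:
  assumes u: "u \<in> units_of_ring" and e: "central_idem e" and g: "g \<in> idems"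
  shows "weakly_clean_elem (u * e + g)"
proof -
  define h where "h = e * g + (1 - e) * (1 - g)"
  have "h \<in> idems"
    unfolding h_def using central_idem_combine_idems[OF e g compl_idem[OF g]] .
  moreover have "e * u + (1 - e) * (2 * g - 1) \<in> units_of_ring"
    using central_idem_combine_units[OF e u self_inverse_in_units[OF idem_reflection_squared(1)[OF g]]] .
  moreover have "u * e + g = (e * u + (1 - e) * (2 * g - 1)) + h"
    using central_idem_commute[OF e, of u] by (simp add: h_def algebra_simps mult_2 mult_2_right)
  ultimately show ?thesis unfolding weakly_clean_elem_def by blast
qed

lemma unit_mult_central_idem_diff_idem_weakly_clean:
  assumes u: "u \<in> units_of_ring" and e: "central_idem e" and g: "g \<in> idems"
  shows "weakly_clean_elem (u * e - g)"
proof -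
  define h where "h = e * g + (1 - e) * (1 - g)"
  have "h \<in> idems"
    unfolding h_def using central_idem_combine_idems[OF e g compl_idem[OF g]] .
  moreover have "e * u + (1 - e) * (1 - 2 * g) \<in> units_of_ring"
    using central_idem_combine_units[OF e u self_inverse_in_units[OF idem_reflection_squared(2)[OF g]]] .
  moreover have "u * e - g = (e * u + (1 - e) * (1 - 2 * g)) - h"
    using central_idem_commute[OF e, of u] by (simp add: h_def algebra_simps mult_2 mult_2_right)
  ultimately show ?thesis unfolding weakly_clean_elem_def by blast
qed

lemma reflexive_inverse_of_inner_inverse:
  fixes r y :: "'a::semigroup_mult"
  assumes ryr: "r * y * r = r"
  shows "\<exists>z. r * z * r = r \<and> z * r * z = z"
proof -
  have ryr_assoc: "r * (y * (r * x)) = r * x" for x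
  proof -
    have "r * (y * (r * x)) = (r * y * r) * x" by (simp only: mult.assoc)
    then show ?thesis using ryr by simp
  qed
  have "r * (y * r * y) * r = r" and "y * r * y * r * (y * r * y) = y * r * y"
    using ryr by (simp_all add: mult.assoc ryr_assoc)
  then show ?thesis by blast
qed

lemma reflexive_inverse_idems:
  fixes r z :: "'a::ring_1"
  assumes rzr: "r * z * r = r" and zrz: "z * r * z = z"
  shows "r * z \<in> idems" and "z * r \<in> idems"
proof -
  have "r * z * (r * z) = (r * z * r) * z" and "z * r * (z * r) = (z * r * z) * r"
    by (simp_all only: mult.assoc)
  then show "r * z \<in> idems" and "z * r \<in> idems"
    using rzr zrz by (simp_all add: idems_def)
qed

text \<open>\<open>r z\<close> and \<open>z r\<close> absorb each other, so being central they coincide.\<close>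

lemma abelian_reflexive_inverse_commute:
  fixes r z :: "'a::ring_1"
  assumes ab: "abelian_ring TYPE('a)" and rzr: "r * z * r = r" and zrz: "z * r * z = z"
  shows "r * z = z * r"
proof -
  have e: "central_idem (r * z)" and f: "central_idem (z * r)"
    using abelian_ring_central_idem[OF ab] reflexive_inverse_idems[OF rzr zrz] by blast+
  have "r * z = r * (z * r * z)" using zrz by simp
  also have "\<dots> = z * r * (r * z)" by (rule central_idem_left_commute[OF f])
  also have "\<dots> = r * z * (z * r)" by (rule central_idem_commute[OF e, symmetric])
  also have "\<dots> = z * (r * z * r)" by (rule central_idem_left_commute[OF e, symmetric])
  also have "\<dots> = z * r" using rzr by simp
  finally show ?thesis .
qed

lemma group_inverse_unit_mult_idem:
  fixes r z :: "'a::ring_1"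
  assumes rzr: "r * z * r = r" and zrz: "z * r * z = z" and comm: "r * z = z * r"
  shows "\<exists>u\<in>units_of_ring. \<exists>e\<in>idems. r = u * e"
proof -
  define e where "e = r * z"
  have e: "e \<in> idems" using reflexive_inverse_idems(1)[OF rzr zrz] by (simp add: e_def)
  then have ee: "e * e = e" by (simp add: idems_def)
  have er: "e * r = r" and ze: "z * e = z"
    using rzr zrz by (simp_all add: e_def mult.assoc[symmetric])
  have re: "r * e = r" and ez: "e * z = z"
    using rzr zrz by (simp_all add: e_def comm mult.assoc[symmetric])
  define u where "u = r + (1 - e)"
  define v where "v = z + (1 - e)"
  have "u * v = r * z + r * (1 - e) + (1 - e) * z + (1 - e) * (1 - e)"
    by (simp add: u_def v_def algebra_simps)
  also have "\<dots> = 1" using re ez ee by (simp add: e_def[symmetric] algebra_simps)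
  finally have uv: "u * v = 1" .
  have "v * u = z * r + z * (1 - e) + (1 - e) * r + (1 - e) * (1 - e)"
    by (simp add: u_def v_def algebra_simps)
  also have "\<dots> = 1" using ze er ee comm by (simp add: e_def[symmetric] algebra_simps)
  finally have "v * u = 1" .
  with uv have "u \<in> units_of_ring" unfolding units_of_ring_def by blast
  moreover have "r = u * e" using re ee by (simp add: u_def algebra_simps)
  ultimately show ?thesis using e by blast
qed

lemma abelian_regs_unit_mult_idem:
  assumes "abelian_ring TYPE('a::ring_1)" and "(r::'a) \<in> regs"
  shows "\<exists>u\<in>units_of_ring. \<exists>e\<in>idems. r = u * e"
proof -
  obtain y where "r = r * y * r" using assms(2) unfolding regs_def by blast
  then obtain z where rzr: "r * z * r = r" and zrz: "z * r * z = z"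
    using reflexive_inverse_of_inner_inverse[of r y] by auto
  show ?thesis
    using group_inverse_unit_mult_idem[OF rzr zrz abelian_reflexive_inverse_commute[OF assms(1) rzr zrz]] .
qed

lemma abelian_weakly_r_clean_imp_weakly_clean_elem:
  assumes ab: "abelian_ring TYPE('a::ring_1)" and "weakly_r_clean_elem (x::'a)"
  shows "weakly_clean_elem x"
proof -
  obtain r g where r: "r \<in> regs" and g: "g \<in> idems" and x: "x = r + g \<or> x = r - g"
    using assms(2) unfolding weakly_r_clean_elem_def by blast
  obtain u e where u: "u \<in> units_of_ring" and e: "e \<in> idems" and r_eq: "r = u * e"
    using abelian_regs_unit_mult_idem[OF ab r] by blast
  have e_central: "central_idem e" using abelian_ring_central_idem[OF ab e] .
  show ?thesis
    using x unfolding r_eq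
    using unit_mult_central_idem_add_idem_weakly_clean[OF u e_central g]
      unit_mult_central_idem_diff_idem_weakly_clean[OF u e_central g] by blast
qed

theorem theorem2p8:
  assumes "abelian_ring TYPE('a::ring_1)"
  shows "weakly_clean_ring TYPE('a) \<longleftrightarrow> weakly_r_clean_ring TYPE('a)"
  unfolding weakly_clean_ring_def weakly_r_clean_ring_def
  using weakly_clean_imp_weakly_r_clean_elem abelian_weakly_r_clean_imp_weakly_clean_elem[OF assms]
  by blast

end
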